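(* Let $M$ be a compact metric space and $f:M\to M$ a homeomorphism. Then: (1) for every finite open covering $\mathcal{U}$ of $M$, $[a_{f,\mathcal{U}}(n)]\in\mathbb{B}$; (2) $o(f)\in\overline{\mathbb{B}}$.
   Context: Let $\mathcal{O}$ be the set of non-decreasing sequences $a:\mathbb{N}\to[0,\infty)$, $a\approx b$ iff $c_1a(n)\le b(n)\le c_2a(n)$ for all $n$ for some constants $0<c_1\le c_2$, $\mathbb{O}=\mathcal{O}/\!\approx$ with classes $[a(n)]$, ordered by $[a(n)]\le[b(n)]$ iff $a(n)\le Cb(n)$ for all $n$ for some $C>0$; $\overline{\mathbb{O}}$ is its Dedekind–MacNeille completion. A class $[a(n)]$ has the bounded jump property (BJP) if there is $C>0$ with $a(n+1)\le Ca(n)$ for all $n$ (independent of representative); $\mathbb{B}\subset\mathbb{O}$ is the set of such classes and $\overline{\mathbb{B}}=\{\sup(\Gamma)\in\overline{\mathbb{O}}:\Gamma\subset\mathbb{B}\text{ countable}\}$. For a finite open covering $\mathcal{U}=\{U_1,\dots,U_k\}$ of $M$, let $\mathcal{U}^n=\{U_{i_0}\cap f^{-1}(U_{i_1})\cap\cdots\cap f^{-n}(U_{i_n})\neq\emptyset: i_0,\dots,i_n\in\{1,\dots,k\}\}$ and let $a_{f,\mathcal{U}}(n)$ be the minimal cardinality of a subcovering of $\mathcal{U}^n$. The generalized entropy is $o(f)=\sup\{[g_{f,\varepsilon}(n)]:\varepsilon>0\}\in\overline{\mathbb{O}}$, where $g_{f,\varepsilon}(n)$ is the minimal cardinality of a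 finite set $G$ such that $M=\bigcup_{x\in G}\{y:\max_{0\le k\le n-1}d(f^kx,f^ky)<\varepsilon\}$; equivalently $o(f)=\sup\{[a_{f,\mathcal{U}}(n)]:\mathcal{U}\text{ a finite open covering}\}$. *)

theory Defs
  imports "HOL-Analysis.Analysis"
begin

definition Oseq :: "(nat \<Rightarrow> real) \<Rightarrow> bool" where
  "Oseq a \<longleftrightarrow> mono a \<and> (\<forall>n. 0 \<le> a n)"

text \<open>The preorder inducing the order on classes: [a] <= [b] iff a(n) <= C b(n) for some C > 0.\<close>
definition dominated :: "(nat \<Rightarrow> real) \<Rightarrow> (nat \<Rightarrow> real) \<Rightarrow> bool" where
  "dominated a b \<longleftrightarrow> (\<exists>C>0. \<forall>n. a n \<le> C * b n)"

definition bjp :: "(nat \<Rightarrow> real) \<Rightarrow> bool" where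
  "bjp a \<longleftrightarrow> (\<exists>C>0. \<forall>n. a (Suc n) \<le> C * a n)"

text \<open>An element sup(S) of the Dedekind-MacNeille
  completion of the ordered set of classes is the cut determined by this set of upper bounds;
  two suprema coincide iff their sets of upper bounds coincide.\<close>
definition O_upper :: "(nat \<Rightarrow> real) set \<Rightarrow> (nat \<Rightarrow> real) set" where
  "O_upper S = {b. Oseq b \<and> (\<forall>a\<in>S. dominated a b)}"

text \<open>Membership of a Dedekind-MacNeille element (given by its upper-bound set X) in
  overline-B: it is the supremum of a countable set of BJP classes.\<close>
definition in_Bbar :: "(nat \<Rightarrow> real) set \<Rightarrow> bool" where
  "in_Bbar X \<longleftrightarrow> (\<exists>\<Gamma>. countable \<Gamma> \<and> (\<forall>a\<in>\<Gamma>. Oseq a \<and> bjp a) \<and> O_upper \<Gamma> = X)"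

definition bowen_ball :: "('a::metric_space \<Rightarrow> 'a) \<Rightarrow> 'a set \<Rightarrow> real \<Rightarrow> nat \<Rightarrow> 'a \<Rightarrow> 'a set" where
  "bowen_ball f M \<epsilon> n x = {y\<in>M. \<forall>k<n. dist ((f^^k) x) ((f^^k) y) < \<epsilon>}"

definition bowen_seq :: "('a::metric_space \<Rightarrow> 'a) \<Rightarrow> 'a set \<Rightarrow> real \<Rightarrow> nat \<Rightarrow> real" where
  "bowen_seq f M \<epsilon> n = real (LEAST k. \<exists>G. finite G \<and> G \<subseteq> M \<and> card G = k \<and>
       M = (\<Union>x\<in>G. bowen_ball f M \<epsilon> n x))"

text \<open>Generalized entropy o(f), represented by its set of upper bounds (the DM cut).\<close>
definition gen_entropy :: "('a::metric_space \<Rightarrow> 'a) \<Rightarrow> 'a set \<Rightarrow> (nat \<Rightarrow> real) set" where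
  "gen_entropy f M = O_upper {bowen_seq f M \<epsilon> | \<epsilon>. \<epsilon> > 0}"

definition iter_cover :: "('a \<Rightarrow> 'a) \<Rightarrow> 'a set \<Rightarrow> 'a set set \<Rightarrow> nat \<Rightarrow> 'a set set" where
  "iter_cover f M \<U> n = {W. W \<noteq> {} \<and> (\<exists>V. (\<forall>j\<le>n. V j \<in> \<U>) \<and>
       W = {x\<in>M. \<forall>j\<le>n. (f^^j) x \<in> V j})}"

definition cover_seq :: "('a \<Rightarrow> 'a) \<Rightarrow> 'a set \<Rightarrow> 'a set set \<Rightarrow> nat \<Rightarrow> real" where
  "cover_seq f M \<U> n = real (LEAST k. \<exists>\<V>. \<V> \<subseteq> iter_cover f M \<U> n \<and> finite \<V> \<and>
       card \<V> = k \<and> \<Union>\<V> = M)"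

end

theory Submission
  imports Defs
begin

text \<open>Refining a minimal subcover of \<open>\<U>\<^sup>n\<close> by the sets \<open>f\<^sup>-\<^sup>(\<^sup>n\<^sup>+\<^sup>1\<^sup>)(U)\<close>, \<open>U \<in> \<U>\<close>, gives a
  subcover of \<open>\<U>\<^sup>n\<^sup>+\<^sup>1\<close> at most \<open>|\<U>|\<close> times as large: \<open>a(n+1) \<le> |\<U>| a(n)\<close>.

  For \<open>o(f)\<close>, compare \<open>a\<^sub>\<U>\<close> with the Bowen sequences \<open>g\<^sub>\<epsilon>\<close> in both directions. If all members
  of \<open>\<U>\<close> have diameter \<open>< \<epsilon>\<close>, one point from each member of a subcover of \<open>\<U>\<^sup>n\<close> spans,
  so \<open>g\<^sub>\<epsilon>(n) \<le> a\<^sub>\<U>(n)\<close>. If \<open>\<epsilon>\<close> is a Lebesgue number of \<open>\<U>\<close>, every Bowen ball of length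
  \<open>n+1\<close> lies in a member of \<open>\<U>\<^sup>n\<close>, so \<open>a\<^sub>\<U>(n) \<le> g\<^sub>\<epsilon>(n+1)\<close>, and the jump bound turns this
  into \<open>a\<^sub>\<U>(n) \<le> K g\<^sub>\<epsilon>(n)\<close>. So the countable family of \<open>a\<^sub>\<U>\<close> for covers of mesh \<open>1/(m+1)\<close>
  has the same upper bounds as the family of all \<open>g\<^sub>\<epsilon>\<close>. Only \<open>f(M) \<subseteq> M\<close> is used, not
  continuity.\<close>

lemma funpow_in:
  assumes "f ` M \<subseteq> M" "x \<in> M"
  shows "(f ^^ n) x \<in> M"
  using assms by (induction n) auto

lemma dominated_trans:
  assumes "dominated a b" "dominated b c"
  shows "dominated a c"
proof -
  obtain C D where "C > 0" "D > 0" and ab: "\<forall>n. a n \<le> C * b n" and bc: "\<forall>n. b n \<le> D * c n"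
    using assms unfolding dominated_def by blast
  have "a n \<le> C * (D * c n)" for n
    using ab mult_left_mono[OF spec[OF bc, of n], of C] \<open>C > 0\<close> by (meson less_imp_le order_trans)
  then show ?thesis
    unfolding dominated_def using \<open>C > 0\<close> \<open>D > 0\<close> by (intro exI[of _ "C * D"]) (simp add: mult.assoc)
qed

lemma le_imp_dominated: "(\<And>n. a n \<le> b n) \<Longrightarrow> dominated a b"
  unfolding dominated_def by (intro exI[of _ 1]) auto

lemma O_upper_eq_if_mutually_dominated:
  assumes "\<forall>a\<in>S. \<exists>b\<in>T. dominated a b" "\<forall>b\<in>T. \<exists>a\<in>S. dominated b a"
  shows "O_upper S = O_upper T"
  using assms unfolding O_upper_def by (blast intro: dominated_trans)

subsection \<open>The iterated covers \<open>\<U>\<^sup>n\<close>\<close>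

lemma iter_cover_subset: "W \<in> iter_cover f M \<U> n \<Longrightarrow> W \<subseteq> M"
  unfolding iter_cover_def by auto

lemma iter_cover_memE:
  assumes "W \<in> iter_cover f M \<U> n"
  obtains V where "\<forall>j\<le>n. V j \<in> \<U>" "W = {x\<in>M. \<forall>j\<le>n. (f ^^ j) x \<in> V j}" "W \<noteq> {}"
  using assms unfolding iter_cover_def by blast

lemma iter_cover_memI:
  assumes "x \<in> M" "\<forall>j\<le>n. V j \<in> \<U> \<and> (f ^^ j) x \<in> V j"
  shows "{y\<in>M. \<forall>j\<le>n. (f ^^ j) y \<in> V j} \<in> iter_cover f M \<U> n"
  using assms unfolding iter_cover_def by blast

lemma finite_iter_cover:
  assumes "finite \<U>"
  shows "finite (iter_cover f M \<U> n)"
proof -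
  let ?cyl = "\<lambda>V. {x\<in>M. \<forall>j\<le>n. (f ^^ j) x \<in> V j}"
  have "iter_cover f M \<U> n \<subseteq> ?cyl ` PiE {..n} (\<lambda>_. \<U>)"
  proof
    fix W assume "W \<in> iter_cover f M \<U> n"
    then obtain V where "\<forall>j\<le>n. V j \<in> \<U>" "W = ?cyl V"
      unfolding iter_cover_def by auto
    then have "restrict V {..n} \<in> PiE {..n} (\<lambda>_. \<U>)" "W = ?cyl (restrict V {..n})"
      by auto
    then show "W \<in> ?cyl ` PiE {..n} (\<lambda>_. \<U>)" by blast
  qed
  then show ?thesis
    using assms by (meson finite_PiE finite_atMost finite_imageI finite_subset)
qed

lemma Union_iter_cover:
  assumes "f ` M \<subseteq> M" "\<Union>\<U> = M"
  shows "\<Union>(iter_cover f M \<U> n) = M"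
proof
  show "\<Union>(iter_cover f M \<U> n) \<subseteq> M"
    using iter_cover_subset by blast
  show "M \<subseteq> \<Union>(iter_cover f M \<U> n)"
  proof
    fix x assume "x \<in> M"
    then have "(f ^^ j) x \<in> \<Union>\<U>" for j
      using assms funpow_in by simp
    then have "\<forall>j. \<exists>A. A \<in> \<U> \<and> (f ^^ j) x \<in> A"
      by blast
    then obtain V where "\<forall>j. V j \<in> \<U> \<and> (f ^^ j) x \<in> V j"
      by (rule choice[THEN exE])
    with \<open>x \<in> M\<close> have "{y\<in>M. \<forall>j\<le>n. (f ^^ j) y \<in> V j} \<in> iter_cover f M \<U> n"
      "x \<in> {y\<in>M. \<forall>j\<le>n. (f ^^ j) y \<in> V j}"
      by (simp_all add: iter_cover_memI)
    then show "x \<in> \<Union>(iter_cover f M \<U> n)"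
      by blast
  qed
qed

lemma iter_cover_Suc_subset:
  assumes "W \<in> iter_cover f M \<U> (Suc n)"
  shows "\<exists>W'\<in>iter_cover f M \<U> n. W \<subseteq> W'"
proof -
  obtain V where V: "\<forall>j\<le>Suc n. V j \<in> \<U>" "W = {x\<in>M. \<forall>j\<le>Suc n. (f ^^ j) x \<in> V j}" "W \<noteq> {}"
    using iter_cover_memE[OF assms] by blast
  then obtain x where "x \<in> W"
    by blast
  with V have "{y\<in>M. \<forall>j\<le>n. (f ^^ j) y \<in> V j} \<in> iter_cover f M \<U> n"
    by (intro iter_cover_memI) auto
  moreover have "W \<subseteq> {y\<in>M. \<forall>j\<le>n. (f ^^ j) y \<in> V j}"
    using V(2) by auto
  ultimately show ?thesis
    by blast
qed

lemma iter_cover_Suc_memI: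
  assumes "W \<in> iter_cover f M \<U> n" "A \<in> \<U>" "W \<inter> {x. (f ^^ Suc n) x \<in> A} \<noteq> {}"
  shows "W \<inter> {x. (f ^^ Suc n) x \<in> A} \<in> iter_cover f M \<U> (Suc n)"
proof -
  obtain V where V: "\<forall>j\<le>n. V j \<in> \<U>" "W = {x\<in>M. \<forall>j\<le>n. (f ^^ j) x \<in> V j}"
    using iter_cover_memE[OF assms(1)] by blast
  have "W \<inter> {x. (f ^^ Suc n) x \<in> A} = {x\<in>M. \<forall>j\<le>Suc n. (f ^^ j) x \<in> (V(Suc n := A)) j}"
    using V(2) by (auto simp: le_Suc_eq)
  moreover have "\<forall>j\<le>Suc n. (V(Suc n := A)) j \<in> \<U>"
    using V(1) assms(2) by (auto simp: le_Suc_eq)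
  ultimately show ?thesis
    using assms(3) unfolding iter_cover_def by blast
qed

subsection \<open>The sequence \<open>a\<^sub>f\<^sub>,\<^sub>\<U>\<close>\<close>

lemma cover_seq_le_card:
  assumes "\<V> \<subseteq> iter_cover f M \<U> n" "finite \<V>" "\<Union>\<V> = M"
  shows "cover_seq f M \<U> n \<le> card \<V>"
  unfolding cover_seq_def of_nat_le_iff using assms by (intro Least_le) blast

lemma cover_seq_attained:
  assumes "finite \<U>" "f ` M \<subseteq> M" "\<Union>\<U> = M"
  obtains \<V> where "\<V> \<subseteq> iter_cover f M \<U> n" "finite \<V>" "\<Union>\<V> = M"
    "real (card \<V>) = cover_seq f M \<U> n"
proof -
  let ?P = "\<lambda>k. \<exists>\<V>. \<V> \<subseteq> iter_cover f M \<U> n \<and> finite \<V> \<and> card \<V> = k \<and> \<Union>\<V> = M"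
  have "?P (card (iter_cover f M \<U> n))"
    using finite_iter_cover[OF assms(1)] Union_iter_cover[OF assms(2,3)]
    by (intro exI[of _ "iter_cover f M \<U> n"]) simp
  then have "?P (Least ?P)"
    by (rule LeastI)
  then obtain \<V> where "\<V> \<subseteq> iter_cover f M \<U> n" "finite \<V>" "\<Union>\<V> = M" "card \<V> = Least ?P"
    by blast
  moreover have "real (Least ?P) = cover_seq f M \<U> n"
    unfolding cover_seq_def ..
  ultimately show ?thesis
    by (intro that) auto
qed

lemma cover_seq_le_card_refining:
  assumes "finite \<S>" "\<Union>\<S> = M" "\<forall>S\<in>\<S>. \<exists>W\<in>iter_cover f M \<U> n. S \<subseteq> W"
  shows "cover_seq f M \<U> n \<le> card \<S>"
proof -
  obtain h where h: "\<forall>S\<in>\<S>. h S \<in> iter_cover f M \<U> n \<and> S \<subseteq> h S"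
    using assms(3) by metis
  then have "\<Union>(h ` \<S>) = M"
    using assms(2) iter_cover_subset by blast
  with h have "cover_seq f M \<U> n \<le> card (h ` \<S>)"
    using assms(1) by (intro cover_seq_le_card) auto
  also have "\<dots> \<le> card \<S>"
    using card_image_le[OF assms(1)] by simp
  finally show ?thesis .
qed

lemma cover_seq_nonneg: "0 \<le> cover_seq f M \<U> n"
  unfolding cover_seq_def by simp

lemma cover_seq_empty: "cover_seq f {} \<U> n = 0"
  using cover_seq_le_card[of "{}" f "{}" \<U> n] cover_seq_nonneg[of f "{}" \<U> n] by simp

lemma cover_seq_le_Suc:
  assumes "finite \<U>" "f ` M \<subseteq> M" "\<Union>\<U> = M"
  shows "cover_seq f M \<U> n \<le> cover_seq f M \<U> (Suc n)"
proof -
  obtain \<V> where \<V>: "\<V> \<subseteq> iter_cover f M \<U> (Suc n)" "finite \<V>" "\<Union>\<V> = M"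
    "real (card \<V>) = cover_seq f M \<U> (Suc n)"
    using cover_seq_attained[OF assms] .
  then have "\<forall>W\<in>\<V>. \<exists>W'\<in>iter_cover f M \<U> n. W \<subseteq> W'"
    using iter_cover_Suc_subset by blast
  with \<V>(2-4) show ?thesis
    using cover_seq_le_card_refining by metis
qed

lemma cover_seq_Suc_le:
  assumes "finite \<U>" "f ` M \<subseteq> M" "\<Union>\<U> = M"
  shows "cover_seq f M \<U> (Suc n) \<le> card \<U> * cover_seq f M \<U> n"
proof -
  obtain \<V> where \<V>: "\<V> \<subseteq> iter_cover f M \<U> n" "finite \<V>" "\<Union>\<V> = M"
    "real (card \<V>) = cover_seq f M \<U> n"
    using cover_seq_attained[OF assms] .
  define h where "h = (\<lambda>(W, A). W \<inter> {x. (f ^^ Suc n) x \<in> A})"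
  define \<S> where "\<S> = h ` (\<V> \<times> \<U>) - {{}}"
  have fin: "finite (\<V> \<times> \<U>)"
    using \<V>(2) assms(1) by simp
  have "\<Union>\<S> = M"
  proof
    show "\<Union>\<S> \<subseteq> M"
      unfolding \<S>_def h_def using \<V>(3) by auto
    show "M \<subseteq> \<Union>\<S>"
    proof
      fix x assume "x \<in> M"
      then obtain W A where "W \<in> \<V>" "x \<in> W" "A \<in> \<U>" "(f ^^ Suc n) x \<in> A"
        using \<V>(3) assms(3) funpow_in[OF assms(2)] by blast
      then show "x \<in> \<Union>\<S>"
        unfolding \<S>_def h_def by blast
    qed
  qed
  moreover have "\<forall>S\<in>\<S>. S \<in> iter_cover f M \<U> (Suc n)"
    unfolding \<S>_def h_def using \<V>(1) iter_cover_Suc_memI by fastforce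
  ultimately have "cover_seq f M \<U> (Suc n) \<le> card \<S>"
    using fin unfolding \<S>_def by (intro cover_seq_le_card_refining) auto
  also have "\<dots> \<le> card (\<V> \<times> \<U>)"
    unfolding \<S>_def of_nat_le_iff using fin
    by (meson Diff_subset card_image_le card_mono finite_imageI le_trans)
  also have "\<dots> = card \<V> * card \<U>"
    by (simp add: card_cartesian_product)
  finally show ?thesis
    using \<V>(4) by (simp add: mult.commute)
qed

lemma Oseq_cover_seq:
  assumes "finite \<U>" "f ` M \<subseteq> M" "\<Union>\<U> = M"
  shows "Oseq (cover_seq f M \<U>)"
  unfolding Oseq_def
  using cover_seq_le_Suc[OF assms] by (simp add: mono_iff_le_Suc cover_seq_nonneg)

lemma bjp_cover_seq:
  assumes "finite \<U>" "f ` M \<subseteq> M" "\<Union>\<U> = M"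
  shows "bjp (cover_seq f M \<U>)"
  unfolding bjp_def
proof (intro exI[of _ "real (card \<U>) + 1"] conjI allI)
  fix n
  have "cover_seq f M \<U> (Suc n) \<le> card \<U> * cover_seq f M \<U> n"
    by (rule cover_seq_Suc_le[OF assms])
  also have "\<dots> \<le> (real (card \<U>) + 1) * cover_seq f M \<U> n"
    using cover_seq_nonneg by (intro mult_right_mono) auto
  finally show "cover_seq f M \<U> (Suc n) \<le> (real (card \<U>) + 1) * cover_seq f M \<U> n" .
qed simp

subsection \<open>Comparison with the Bowen sequences \<open>g\<^sub>f\<^sub>,\<^sub>\<epsilon>\<close>\<close>

lemma bowen_seq_le_card:
  assumes "finite G" "G \<subseteq> M" "M = (\<Union>x\<in>G. bowen_ball f M \<epsilon> n x)"
  shows "bowen_seq f M \<epsilon> n \<le> card G"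
  unfolding bowen_seq_def of_nat_le_iff using assms by (intro Least_le) blast

lemma finite_fine_open_cover:
  assumes "compact M" "\<epsilon> > 0"
  obtains \<U> where "finite \<U>" "\<forall>A\<in>\<U>. openin (top_of_set M) A" "\<Union>\<U> = M"
    "\<forall>A\<in>\<U>. \<forall>y\<in>A. \<forall>z\<in>A. dist y z < \<epsilon>"
proof -
  obtain K where K: "finite K" "K \<subseteq> M" "M \<subseteq> (\<Union>x\<in>K. ball x (\<epsilon>/2))"
    using seq_compact_imp_totally_bounded[OF compact_imp_seq_compact[OF assms(1)]] assms(2)
    by (meson half_gt_zero)
  define \<U> where "\<U> = (\<lambda>c. M \<inter> ball c (\<epsilon>/2)) ` K"
  have "\<forall>A\<in>\<U>. \<forall>y\<in>A. \<forall>z\<in>A. dist y z < \<epsilon>"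
  proof (intro ballI)
    fix A y z assume "A \<in> \<U>" "y \<in> A" "z \<in> A"
    then obtain c where "dist c y < \<epsilon>/2" "dist c z < \<epsilon>/2"
      unfolding \<U>_def by auto
    then show "dist y z < \<epsilon>"
      using dist_triangle3[of y z c] by linarith
  qed
  moreover have "finite \<U>" "\<forall>A\<in>\<U>. openin (top_of_set M) A" "\<Union>\<U> = M"
    unfolding \<U>_def using K by auto
  ultimately show ?thesis
    using that by blast
qed

lemma dist_funpow_less_if_iter_cover:
  assumes "W \<in> iter_cover f M \<U> n" "\<forall>A\<in>\<U>. \<forall>y\<in>A. \<forall>z\<in>A. dist y z < \<epsilon>"
    and "y \<in> W" "z \<in> W" "k \<le> n"
  shows "dist ((f ^^ k) y) ((f ^^ k) z) < \<epsilon>"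
proof -
  obtain V where "\<forall>j\<le>n. V j \<in> \<U>" "W = {x\<in>M. \<forall>j\<le>n. (f ^^ j) x \<in> V j}"
    using iter_cover_memE[OF assms(1)] by blast
  with assms(3-5) have "(f ^^ k) y \<in> V k" "(f ^^ k) z \<in> V k" "V k \<in> \<U>"
    by auto
  with assms(2) show ?thesis
    by blast
qed

lemma bowen_cover_from_iter_cover:
  assumes "\<V> \<subseteq> iter_cover f M \<U> n" "finite \<V>" "\<Union>\<V> = M"
    and fine: "\<forall>A\<in>\<U>. \<forall>y\<in>A. \<forall>z\<in>A. dist y z < \<epsilon>"
  obtains G where "finite G" "G \<subseteq> M" "card G \<le> card \<V>" "M = (\<Union>x\<in>G. bowen_ball f M \<epsilon> n x)"
proof -
  have "\<forall>W\<in>\<V>. W \<noteq> {}"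
    using assms(1) iter_cover_memE by blast
  then obtain p where p: "\<forall>W\<in>\<V>. p W \<in> W"
    by (metis ex_in_conv)
  have "p ` \<V> \<subseteq> M"
    using p assms(1) iter_cover_subset by blast
  moreover have "M \<subseteq> (\<Union>x\<in>p ` \<V>. bowen_ball f M \<epsilon> n x)"
  proof
    fix y assume "y \<in> M"
    then obtain W where "W \<in> \<V>" "y \<in> W"
      using assms(3) by blast
    then have "W \<in> iter_cover f M \<U> n" "p W \<in> W"
      using assms(1) p by auto
    then have "dist ((f ^^ k) (p W)) ((f ^^ k) y) < \<epsilon>" if "k < n" for k
      using dist_funpow_less_if_iter_cover[OF _ fine _ \<open>y \<in> W\<close>] that by simp
    then have "y \<in> bowen_ball f M \<epsilon> n (p W)"
      unfolding bowen_ball_def using \<open>y \<in> M\<close> by blast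
    then show "y \<in> (\<Union>x\<in>p ` \<V>. bowen_ball f M \<epsilon> n x)"
      using \<open>W \<in> \<V>\<close> by blast
  qed
  moreover have "(\<Union>x\<in>p ` \<V>. bowen_ball f M \<epsilon> n x) \<subseteq> M"
    unfolding bowen_ball_def by auto
  ultimately have "M = (\<Union>x\<in>p ` \<V>. bowen_ball f M \<epsilon> n x)"
    by (intro equalityI)
  with \<open>p ` \<V> \<subseteq> M\<close> show ?thesis
    using assms(2) card_image_le[OF assms(2)] by (intro that[of "p ` \<V>"]) simp_all
qed

lemma bowen_seq_le_cover_seq:
  assumes "finite \<U>" "f ` M \<subseteq> M" "\<Union>\<U> = M"
    and "\<forall>A\<in>\<U>. \<forall>y\<in>A. \<forall>z\<in>A. dist y z < \<epsilon>"
  shows "bowen_seq f M \<epsilon> n \<le> cover_seq f M \<U> n"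
proof -
  obtain \<V> where \<V>: "\<V> \<subseteq> iter_cover f M \<U> n" "finite \<V>" "\<Union>\<V> = M"
    "real (card \<V>) = cover_seq f M \<U> n"
    using cover_seq_attained[OF assms(1-3)] .
  obtain G where G: "finite G" "G \<subseteq> M" "card G \<le> card \<V>" "M = (\<Union>x\<in>G. bowen_ball f M \<epsilon> n x)"
    using bowen_cover_from_iter_cover[OF \<V>(1-3) assms(4)] .
  have "bowen_seq f M \<epsilon> n \<le> card G"
    using bowen_seq_le_card[OF G(1,2,4)] .
  also have "\<dots> \<le> card \<V>"
    using G(3) by simp
  finally show ?thesis
    using \<V>(4) by simp
qed

lemma bowen_seq_attained:
  assumes "compact M" "f ` M \<subseteq> M" "\<epsilon> > 0"
  obtains G where "finite G" "G \<subseteq> M" "M = (\<Union>x\<in>G. bowen_ball f M \<epsilon> n x)"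
    "real (card G) = bowen_seq f M \<epsilon> n"
proof -
  let ?P = "\<lambda>k. \<exists>G. finite G \<and> G \<subseteq> M \<and> card G = k \<and> M = (\<Union>x\<in>G. bowen_ball f M \<epsilon> n x)"
  obtain \<U> where \<U>: "finite \<U>" "\<forall>A\<in>\<U>. openin (top_of_set M) A" "\<Union>\<U> = M"
    "\<forall>A\<in>\<U>. \<forall>y\<in>A. \<forall>z\<in>A. dist y z < \<epsilon>"
    using finite_fine_open_cover[OF assms(1,3)] .
  obtain \<V> where \<V>: "\<V> \<subseteq> iter_cover f M \<U> n" "finite \<V>" "\<Union>\<V> = M"
    "real (card \<V>) = cover_seq f M \<U> n"
    using cover_seq_attained[OF \<U>(1) assms(2) \<U>(3)] .
  obtain G where "finite G" "G \<subseteq> M" "card G \<le> card \<V>" "M = (\<Union>x\<in>G. bowen_ball f M \<epsilon> n x)"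
    using bowen_cover_from_iter_cover[OF \<V>(1-3) \<U>(4)] .
  then have "?P (card G)"
    by (intro exI[of _ G]) simp
  then have "?P (Least ?P)"
    by (rule LeastI)
  then obtain G' where "finite G'" "G' \<subseteq> M" "M = (\<Union>x\<in>G'. bowen_ball f M \<epsilon> n x)" "card G' = Least ?P"
    by blast
  moreover have "real (Least ?P) = bowen_seq f M \<epsilon> n"
    unfolding bowen_seq_def ..
  ultimately show ?thesis
    by (intro that) auto
qed

lemma bowen_seq_ge_1:
  assumes "compact M" "f ` M \<subseteq> M" "\<epsilon> > 0" "M \<noteq> {}"
  shows "1 \<le> bowen_seq f M \<epsilon> n"
proof -
  obtain G where G: "finite G" "G \<subseteq> M" "M = (\<Union>x\<in>G. bowen_ball f M \<epsilon> n x)"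
    "real (card G) = bowen_seq f M \<epsilon> n"
    using bowen_seq_attained[OF assms(1-3)] .
  have "G \<noteq> {}"
    using G(3) assms(4) by auto
  then have "1 \<le> card G"
    using G(1) by (simp add: Suc_le_eq card_gt_0_iff)
  with G(4) show ?thesis
    by simp
qed

lemma Lebesgue_number_openin:
  assumes "compact M" "\<forall>A\<in>\<U>. openin (top_of_set M) A" "\<Union>\<U> = M"
  obtains e where "e > 0" "\<forall>x\<in>M. \<exists>A\<in>\<U>. ball x e \<inter> M \<subseteq> A"
proof -
  have "\<forall>A\<in>\<U>. \<exists>T. open T \<and> A = M \<inter> T"
    using assms(2) by (simp add: openin_open)
  then obtain T where T: "\<forall>A\<in>\<U>. open (T A) \<and> A = M \<inter> T A"
    by (rule bchoice[THEN exE])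
  then have "M \<subseteq> \<Union>(T ` \<U>)" "\<And>B. B \<in> T ` \<U> \<Longrightarrow> open B"
    using assms(3) by blast+
  then obtain e where e: "e > 0" "\<And>x. x \<in> M \<Longrightarrow> \<exists>B\<in>T ` \<U>. ball x e \<subseteq> B"
    using Heine_Borel_lemma[OF assms(1)] by metis
  have "\<exists>A\<in>\<U>. ball x e \<inter> M \<subseteq> A" if x: "x \<in> M" for x
  proof -
    obtain A where "A \<in> \<U>" "ball x e \<subseteq> T A"
      using e(2)[OF x] by blast
    moreover have "A = M \<inter> T A"
      using T \<open>A \<in> \<U>\<close> by blast
    ultimately show ?thesis
      by blast
  qed
  with e(1) show ?thesis
    using that by blast
qed

lemma bowen_ball_subset_iter_cover:
  assumes "\<forall>x\<in>M. \<exists>A\<in>\<U>. ball x e \<inter> M \<subseteq> A" "f ` M \<subseteq> M" "x \<in> M" "e > 0"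
  shows "\<exists>W\<in>iter_cover f M \<U> n. bowen_ball f M e (Suc n) x \<subseteq> W"
proof -
  have "\<forall>j. \<exists>A. A \<in> \<U> \<and> ball ((f ^^ j) x) e \<inter> M \<subseteq> A"
    using assms(1) funpow_in[OF assms(2,3)] by blast
  then obtain V where V: "\<forall>j. V j \<in> \<U> \<and> ball ((f ^^ j) x) e \<inter> M \<subseteq> V j"
    by (rule choice[THEN exE])
  have in_V: "(f ^^ j) y \<in> V j" if "y \<in> M" "dist ((f ^^ j) x) ((f ^^ j) y) < e" for y j
  proof -
    have "(f ^^ j) y \<in> ball ((f ^^ j) x) e \<inter> M"
      using funpow_in[OF assms(2) that(1)] that(2) by simp
    with V show ?thesis
      by blast
  qed
  have "\<forall>j\<le>n. V j \<in> \<U> \<and> (f ^^ j) x \<in> V j"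
    using V in_V assms(3,4) by simp
  then have "{y\<in>M. \<forall>j\<le>n. (f ^^ j) y \<in> V j} \<in> iter_cover f M \<U> n"
    by (rule iter_cover_memI[OF assms(3)])
  moreover have "bowen_ball f M e (Suc n) x \<subseteq> {y\<in>M. \<forall>j\<le>n. (f ^^ j) y \<in> V j}"
    unfolding bowen_ball_def using in_V by (simp add: less_Suc_eq_le subset_iff)
  ultimately show ?thesis
    by blast
qed

lemma cover_seq_le_bowen_seq_Suc:
  assumes "compact M" "f ` M \<subseteq> M" "e > 0" "\<forall>x\<in>M. \<exists>A\<in>\<U>. ball x e \<inter> M \<subseteq> A"
  shows "cover_seq f M \<U> n \<le> bowen_seq f M e (Suc n)"
proof -
  obtain G where G: "finite G" "G \<subseteq> M" "M = (\<Union>x\<in>G. bowen_ball f M e (Suc n) x)"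
    "real (card G) = bowen_seq f M e (Suc n)"
    using bowen_seq_attained[OF assms(1-3)] .
  have "\<forall>B\<in>bowen_ball f M e (Suc n) ` G. \<exists>W\<in>iter_cover f M \<U> n. B \<subseteq> W"
    using G(2) bowen_ball_subset_iter_cover[OF assms(4,2) _ assms(3)] by blast
  then have "cover_seq f M \<U> n \<le> card (bowen_ball f M e (Suc n) ` G)"
    using G(1,3) by (intro cover_seq_le_card_refining) simp_all
  also have "\<dots> \<le> card G"
    using card_image_le[OF G(1)] by simp
  finally show ?thesis
    using G(4) by simp
qed

lemma cover_seq_dominated_bowen_seq:
  assumes "compact M" "f ` M \<subseteq> M" "finite \<U>" "\<forall>A\<in>\<U>. openin (top_of_set M) A" "\<Union>\<U> = M"
  obtains e where "e > 0" "dominated (cover_seq f M \<U>) (bowen_seq f M e)"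
proof -
  obtain e where e: "e > 0" "\<forall>x\<in>M. \<exists>A\<in>\<U>. ball x e \<inter> M \<subseteq> A"
    using Lebesgue_number_openin[OF assms(1,4,5)] .
  define K where "K = real (card \<U>) + cover_seq f M \<U> 0 + 1"
  have "card \<U> \<le> K" "cover_seq f M \<U> 0 \<le> K" "K > 0"
    unfolding K_def using cover_seq_nonneg[of f M \<U> 0] by simp_all
  have "cover_seq f M \<U> n \<le> K * bowen_seq f M e n" for n
  proof (cases "M = {}")
    case True
    then show ?thesis
      using \<open>K > 0\<close> by (simp add: cover_seq_empty bowen_seq_def)
  next
    case False
    then have bowen_ge_1: "1 \<le> bowen_seq f M e n" for n
      using bowen_seq_ge_1[OF assms(1,2) e(1)] by blast
    show ?thesis
    proof (cases n)
      case 0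
      have "cover_seq f M \<U> 0 \<le> K * 1"
        using \<open>cover_seq f M \<U> 0 \<le> K\<close> by simp
      also have "\<dots> \<le> K * bowen_seq f M e 0"
        using bowen_ge_1 \<open>K > 0\<close> by (intro mult_left_mono) simp_all
      finally show ?thesis
        using 0 by simp
    next
      case (Suc m)
      have "cover_seq f M \<U> (Suc m) \<le> card \<U> * cover_seq f M \<U> m"
        by (rule cover_seq_Suc_le[OF assms(3,2,5)])
      also have "\<dots> \<le> card \<U> * bowen_seq f M e (Suc m)"
        using cover_seq_le_bowen_seq_Suc[OF assms(1,2) e] by (intro mult_left_mono) simp_all
      also have "\<dots> \<le> K * bowen_seq f M e (Suc m)"
        using \<open>card \<U> \<le> K\<close> bowen_ge_1[of "Suc m"] by (intro mult_right_mono) linarith+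
      finally show ?thesis
        using Suc by simp
    qed
  qed
  with e(1) \<open>K > 0\<close> show ?thesis
    using that unfolding dominated_def by blast
qed

theorem proposition2p4:
  fixes M :: "'a::metric_space set" and f :: "'a \<Rightarrow> 'a"
  assumes "compact M"
    and "\<exists>g. homeomorphism M M f g"
  shows "(\<forall>\<U>. finite \<U> \<and> (\<forall>U\<in>\<U>. openin (top_of_set M) U) \<and> \<Union>\<U> = M
            \<longrightarrow> Oseq (cover_seq f M \<U>) \<and> bjp (cover_seq f M \<U>))
         \<and> in_Bbar (gen_entropy f M)"
proof -
  have fM: "f ` M \<subseteq> M"
    using assms(2) homeomorphism_image1 by blast
  have "\<exists>\<U>. finite \<U> \<and> (\<forall>A\<in>\<U>. openin (top_of_set M) A) \<and> \<Union>\<U> = M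
     \<and> (\<forall>A\<in>\<U>. \<forall>y\<in>A. \<forall>z\<in>A. dist y z < 1 / Suc m)" for m
  proof -
    have "(0::real) < 1 / Suc m"
      by simp
    from finite_fine_open_cover[OF assms(1) this] show ?thesis
      by metis
  qed
  then obtain \<U> where \<U>: "\<And>m. finite (\<U> m)" "\<And>m. \<forall>A\<in>\<U> m. openin (top_of_set M) A"
    "\<And>m. \<Union>(\<U> m) = M" "\<And>m. \<forall>A\<in>\<U> m. \<forall>y\<in>A. \<forall>z\<in>A. dist y z < 1 / Suc m"
    by metis
  define \<Gamma> where "\<Gamma> = range (\<lambda>m. cover_seq f M (\<U> m))"
  have "\<forall>a\<in>\<Gamma>. \<exists>b\<in>{bowen_seq f M \<epsilon> | \<epsilon>. \<epsilon> > 0}. dominated a b"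
    unfolding \<Gamma>_def using cover_seq_dominated_bowen_seq[OF assms(1) fM \<U>(1-3)] by blast
  moreover have "\<exists>a\<in>\<Gamma>. dominated (bowen_seq f M \<epsilon>) a" if \<epsilon>: "\<epsilon> > 0" for \<epsilon>
  proof -
    obtain m where "inverse (Suc m) < \<epsilon>"
      using reals_Archimedean[OF \<epsilon>] by blast
    then have "\<forall>A\<in>\<U> m. \<forall>y\<in>A. \<forall>z\<in>A. dist y z < \<epsilon>"
      using \<U>(4)[of m] by (simp add: inverse_eq_divide) (meson less_trans)
    then have "dominated (bowen_seq f M \<epsilon>) (cover_seq f M (\<U> m))"
      by (intro le_imp_dominated bowen_seq_le_cover_seq[OF \<U>(1) fM \<U>(3)])
    then show ?thesis
      unfolding \<Gamma>_def by blast
  qed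
  ultimately have "O_upper \<Gamma> = gen_entropy f M"
    unfolding gen_entropy_def by (intro O_upper_eq_if_mutually_dominated) blast+
  moreover have "\<forall>a\<in>\<Gamma>. Oseq a \<and> bjp a"
    unfolding \<Gamma>_def using Oseq_cover_seq[OF \<U>(1) fM \<U>(3)] bjp_cover_seq[OF \<U>(1) fM \<U>(3)] by blast
  moreover have "countable \<Gamma>"
    unfolding \<Gamma>_def by simp
  ultimately have "in_Bbar (gen_entropy f M)"
    unfolding in_Bbar_def by blast
  then show ?thesis
    by (simp add: Oseq_cover_seq[OF _ fM] bjp_cover_seq[OF _ fM])
qed

end
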